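(* Let $P:\mathcal{C}^{\mathrm{op}}\to\mathbf{Pos}$ be a Gödel doctrine. Then for all objects $I,U,X,V,Y$ of $\mathcal{C}$ and all quantifier-free predicates $\psi_D\in P(I\times U\times X)$ and $\phi_D\in P(I\times V\times Y)$ we have \[ i:I\;|\;\exists u.\forall x.\,\psi_D(i,u,x)\vdash\exists v.\forall y.\,\phi_D(i,v,y)\] if and only if there exist arrows $f_0:I\times U\to V$ and $f_1:I\times U\times Y\to X$ of $\mathcal{C}$ such that \[ u:U,y:Y,i:I\;|\;\psi_D(i,u,f_1(i,u,y))\vdash\phi_D(i,f_0(i,u),y).\]
   Context: A doctrine is a functor $P:\mathcal{C}^{\mathrm{op}}\to\mathbf{Pos}$ where $\mathcal{C}$ has finite products; $P_f$ denotes reindexing along $f$. $P$ is existential (resp. universal) if for every product projection $\pi_i:A_1\times A_2\to A_i$ the map $P_{\pi_i}$ has a left adjoint $\exists_{\pi_i}$ (resp. right adjoint $\forall_{\pi_i}$) satisfying Beck–Chevalley: for every pullback of a projection $\pi:X\to A$ along $f:A'\to A$, with projection $\pi':X'\to A'$ and $f':X'\to X$, $\exists_{\pi'}P_{f'}\beta=P_f\exists_\pi\beta$ (resp. $\forall_{\pi'}P_{f'}\beta=P_f\forall_\pi\beta$). Notation: $a_1:A_1,\dots,a_n:A_n\;|\;\phi\vdash\psi$ means $\phi\le\psi$ in $P(A_1\times\dots\times A_n)$; $\exists b.\psi(a,b)$, $\forall b.\psi(a,b)$ denote $\exists_{\pi_A}\psi$, $\forall_{\pi_A}\psi$; substitution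 of terms (arrows) is reindexing. In an existential doctrine, $\alpha\in P(A)$ is an existential splitting if for every $B$ and $\beta\in P(A\times B)$ with $\alpha\le\exists_{\pi_A}\beta$ there is $g:A\to B$ with $\alpha\le P_{\langle1_A,g\rangle}\beta$; $\alpha\in P(I)$ is existential-free if $P_f\alpha$ is an existential splitting for all $f:A\to I$. In a universal doctrine $Q$, $\alpha\in Q(A)$ is a universal splitting if for every $B$ and $\beta\in Q(A\times B)$ with $\forall_{\pi_A}\beta\le\alpha$ there is $g:A\to B$ with $Q_{\langle1_A,g\rangle}\beta\le\alpha$; $\alpha\in Q(I)$ is universal-free if $Q_f\alpha$ is a universal splitting for all $f:A\to I$. Enough existential-free (resp. universal-free) predicates: every $\alpha\in P(I)$ equals $\exists_{\pi_I}\beta$ (resp. $\forall_{\pi_I}\beta$) for some object $A$ and existential-free (resp. universal-free) $\beta\in P(I\times A)$. A Gödel doctrine is a doctrine $P$ such that: (1) $\mathcal{C}$ is cartesian closed; (2) $P$ is existential and universal; (3) $P$ has enough existential-free predicates; (4) if $\alpha$ is existential-free then $\forall_\pi\alpha$ is existential-free for every projection $\pi$; (5) the sub-doctrine $P'$ of existential-free predicates (universal by (4)) has enough universal-free predicates. A predicate is quantifier-free if it is existential-free in $P$ and universal-free in $P'$. *)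

theory Defs
  imports Main
begin

text \<open>A doctrine P : C^op -> Pos over a category C with chosen finite products,
  presented by explicit data: objects/arrows of C, composition, identities,
  chosen binary products, the posets P(A) (as carrier sets with an order indexed
  by the object), reindexing, and quantifiers along the two chosen product
  projections.\<close>

record ('o, 'a, 'p) doctrine =
  Ob   :: "'o set"
  Ar   :: "'a set"
  dm   :: "'a \<Rightarrow> 'o"
  cd   :: "'a \<Rightarrow> 'o"
  cmp  :: "'a \<Rightarrow> 'a \<Rightarrow> 'a"    (* cmp g f = g o f *)
  idt  :: "'o \<Rightarrow> 'a"
  prd  :: "'o \<Rightarrow> 'o \<Rightarrow> 'o"
  pr1  :: "'o \<Rightarrow> 'o \<Rightarrow> 'a"
  pr2  :: "'o \<Rightarrow> 'o \<Rightarrow> 'a"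
  pair :: "'a \<Rightarrow> 'a \<Rightarrow> 'a"
  Pr   :: "'o \<Rightarrow> 'p set"
  le   :: "'o \<Rightarrow> 'p \<Rightarrow> 'p \<Rightarrow> bool"
  rdx  :: "'a \<Rightarrow> 'p \<Rightarrow> 'p"
  ex1  :: "'o \<Rightarrow> 'o \<Rightarrow> 'p \<Rightarrow> 'p"   (* along pr1 A B : A x B -> A *)
  ex2  :: "'o \<Rightarrow> 'o \<Rightarrow> 'p \<Rightarrow> 'p"   (* along pr2 A B : A x B -> B *)
  all1 :: "'o \<Rightarrow> 'o \<Rightarrow> 'p \<Rightarrow> 'p"
  all2 :: "'o \<Rightarrow> 'o \<Rightarrow> 'p \<Rightarrow> 'p"

definition hom :: "('o, 'a, 'p) doctrine \<Rightarrow> 'o \<Rightarrow> 'o \<Rightarrow> 'a set" where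
  "hom D A B = {f \<in> Ar D. dm D f = A \<and> cd D f = B}"

definition is_category :: "('o, 'a, 'p) doctrine \<Rightarrow> bool" where
  "is_category D \<longleftrightarrow>
     (\<forall>f\<in>Ar D. dm D f \<in> Ob D \<and> cd D f \<in> Ob D) \<and>
     (\<forall>A\<in>Ob D. idt D A \<in> hom D A A) \<and>
     (\<forall>f\<in>Ar D. \<forall>g\<in>Ar D. cd D f = dm D g \<longrightarrow> cmp D g f \<in> hom D (dm D f) (cd D g)) \<and>
     (\<forall>f\<in>Ar D. cmp D f (idt D (dm D f)) = f \<and> cmp D (idt D (cd D f)) f = f) \<and>
     (\<forall>f\<in>Ar D. \<forall>g\<in>Ar D. \<forall>h\<in>Ar D. cd D f = dm D g \<longrightarrow> cd D g = dm D h \<longrightarrow>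
        cmp D h (cmp D g f) = cmp D (cmp D h g) f)"

definition has_finite_products :: "('o, 'a, 'p) doctrine \<Rightarrow> bool" where
  "has_finite_products D \<longleftrightarrow>
     (\<exists>T\<in>Ob D. \<forall>A\<in>Ob D. \<exists>!t. t \<in> hom D A T) \<and>
     (\<forall>A\<in>Ob D. \<forall>B\<in>Ob D.
        prd D A B \<in> Ob D \<and> pr1 D A B \<in> hom D (prd D A B) A \<and> pr2 D A B \<in> hom D (prd D A B) B \<and>
        (\<forall>C\<in>Ob D. \<forall>f\<in>hom D C A. \<forall>g\<in>hom D C B.
           pair D f g \<in> hom D C (prd D A B) \<and>
           cmp D (pr1 D A B) (pair D f g) = f \<and> cmp D (pr2 D A B) (pair D f g) = g \<and>
           (\<forall>h\<in>hom D C (prd D A B). cmp D (pr1 D A B) h = f \<and> cmp D (pr2 D A B) h = g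
              \<longrightarrow> h = pair D f g)))"

definition times :: "('o, 'a, 'p) doctrine \<Rightarrow> 'a \<Rightarrow> 'a \<Rightarrow> 'a" where
  "times D f g = pair D (cmp D f (pr1 D (dm D f) (dm D g))) (cmp D g (pr2 D (dm D f) (dm D g)))"

definition cartesian_closed :: "('o, 'a, 'p) doctrine \<Rightarrow> bool" where
  "cartesian_closed D \<longleftrightarrow>
     (\<forall>A\<in>Ob D. \<forall>B\<in>Ob D. \<exists>E\<in>Ob D. \<exists>e\<in>hom D (prd D E A) B.
        \<forall>C\<in>Ob D. \<forall>f\<in>hom D (prd D C A) B.
          \<exists>!h. h \<in> hom D C E \<and> cmp D e (times D h (idt D A)) = f)"

definition is_doctrine :: "('o, 'a, 'p) doctrine \<Rightarrow> bool" where
  "is_doctrine D \<longleftrightarrow>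
     is_category D \<and> has_finite_products D \<and>
     (\<forall>A\<in>Ob D.
        (\<forall>x\<in>Pr D A. le D A x x) \<and>
        (\<forall>x\<in>Pr D A. \<forall>y\<in>Pr D A. \<forall>z\<in>Pr D A. le D A x y \<longrightarrow> le D A y z \<longrightarrow> le D A x z) \<and>
        (\<forall>x\<in>Pr D A. \<forall>y\<in>Pr D A. le D A x y \<longrightarrow> le D A y x \<longrightarrow> x = y)) \<and>
     (\<forall>A\<in>Ob D. \<forall>B\<in>Ob D. \<forall>f\<in>hom D A B. \<forall>x\<in>Pr D B.
        rdx D f x \<in> Pr D A \<and> (\<forall>y\<in>Pr D B. le D B x y \<longrightarrow> le D A (rdx D f x) (rdx D f y))) \<and>
     (\<forall>A\<in>Ob D. \<forall>x\<in>Pr D A. rdx D (idt D A) x = x) \<and>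
     (\<forall>f\<in>Ar D. \<forall>g\<in>Ar D. cd D f = dm D g \<longrightarrow>
        (\<forall>x\<in>Pr D (cd D g). rdx D (cmp D g f) x = rdx D f (rdx D g x)))"

definition existential :: "('o, 'a, 'p) doctrine \<Rightarrow> bool" where
  "existential D \<longleftrightarrow>
     (\<forall>A\<in>Ob D. \<forall>B\<in>Ob D.
        (\<forall>\<beta>\<in>Pr D (prd D A B). ex1 D A B \<beta> \<in> Pr D A \<and> ex2 D A B \<beta> \<in> Pr D B) \<and>
        (\<forall>\<beta>\<in>Pr D (prd D A B). \<forall>\<alpha>\<in>Pr D A.
           le D A (ex1 D A B \<beta>) \<alpha> \<longleftrightarrow> le D (prd D A B) \<beta> (rdx D (pr1 D A B) \<alpha>)) \<and>
        (\<forall>\<beta>\<in>Pr D (prd D A B). \<forall>\<alpha>\<in>Pr D B.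
           le D B (ex2 D A B \<beta>) \<alpha> \<longleftrightarrow> le D (prd D A B) \<beta> (rdx D (pr2 D A B) \<alpha>)) \<and>
        (\<forall>A'\<in>Ob D. \<forall>f\<in>hom D A' A. \<forall>\<beta>\<in>Pr D (prd D A B).
           ex1 D A' B (rdx D (times D f (idt D B)) \<beta>) = rdx D f (ex1 D A B \<beta>)) \<and>
        (\<forall>B'\<in>Ob D. \<forall>g\<in>hom D B' B. \<forall>\<beta>\<in>Pr D (prd D A B).
           ex2 D A B' (rdx D (times D (idt D A) g) \<beta>) = rdx D g (ex2 D A B \<beta>)))"

definition universal :: "('o, 'a, 'p) doctrine \<Rightarrow> bool" where
  "universal D \<longleftrightarrow>
     (\<forall>A\<in>Ob D. \<forall>B\<in>Ob D.
        (\<forall>\<beta>\<in>Pr D (prd D A B). all1 D A B \<beta> \<in> Pr D A \<and> all2 D A B \<beta> \<in> Pr D B) \<and>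
        (\<forall>\<beta>\<in>Pr D (prd D A B). \<forall>\<alpha>\<in>Pr D A.
           le D (prd D A B) (rdx D (pr1 D A B) \<alpha>) \<beta> \<longleftrightarrow> le D A \<alpha> (all1 D A B \<beta>)) \<and>
        (\<forall>\<beta>\<in>Pr D (prd D A B). \<forall>\<alpha>\<in>Pr D B.
           le D (prd D A B) (rdx D (pr2 D A B) \<alpha>) \<beta> \<longleftrightarrow> le D B \<alpha> (all2 D A B \<beta>)) \<and>
        (\<forall>A'\<in>Ob D. \<forall>f\<in>hom D A' A. \<forall>\<beta>\<in>Pr D (prd D A B).
           all1 D A' B (rdx D (times D f (idt D B)) \<beta>) = rdx D f (all1 D A B \<beta>)) \<and>
        (\<forall>B'\<in>Ob D. \<forall>g\<in>hom D B' B. \<forall>\<beta>\<in>Pr D (prd D A B).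
           all2 D A B' (rdx D (times D (idt D A) g) \<beta>) = rdx D g (all2 D A B \<beta>)))"

definition ex_splitting :: "('o, 'a, 'p) doctrine \<Rightarrow> 'o \<Rightarrow> 'p \<Rightarrow> bool" where
  "ex_splitting D A \<alpha> \<longleftrightarrow>
     (\<forall>B\<in>Ob D. \<forall>\<beta>\<in>Pr D (prd D A B). le D A \<alpha> (ex1 D A B \<beta>) \<longrightarrow>
        (\<exists>g\<in>hom D A B. le D A \<alpha> (rdx D (pair D (idt D A) g) \<beta>)))"

definition ex_free :: "('o, 'a, 'p) doctrine \<Rightarrow> 'o \<Rightarrow> 'p \<Rightarrow> bool" where
  "ex_free D I \<alpha> \<longleftrightarrow> \<alpha> \<in> Pr D I \<and>
     (\<forall>A\<in>Ob D. \<forall>f\<in>hom D A I. ex_splitting D A (rdx D f \<alpha>))"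

definition enough_ex_free :: "('o, 'a, 'p) doctrine \<Rightarrow> bool" where
  "enough_ex_free D \<longleftrightarrow>
     (\<forall>I\<in>Ob D. \<forall>\<alpha>\<in>Pr D I. \<exists>A\<in>Ob D. \<exists>\<beta>. ex_free D (prd D I A) \<beta> \<and> \<alpha> = ex1 D I A \<beta>)"

definition forall_preserves_ex_free :: "('o, 'a, 'p) doctrine \<Rightarrow> bool" where
  "forall_preserves_ex_free D \<longleftrightarrow>
     (\<forall>A\<in>Ob D. \<forall>B\<in>Ob D. \<forall>\<alpha>. ex_free D (prd D A B) \<alpha> \<longrightarrow>
        ex_free D A (all1 D A B \<alpha>) \<and> ex_free D B (all2 D A B \<alpha>))"

text \<open>Universal splitting / universal-free in the sub-doctrine P' of existential-free predicates.\<close>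
definition univ_splitting' :: "('o, 'a, 'p) doctrine \<Rightarrow> 'o \<Rightarrow> 'p \<Rightarrow> bool" where
  "univ_splitting' D A \<alpha> \<longleftrightarrow>
     (\<forall>B\<in>Ob D. \<forall>\<beta>. ex_free D (prd D A B) \<beta> \<longrightarrow> le D A (all1 D A B \<beta>) \<alpha> \<longrightarrow>
        (\<exists>g\<in>hom D A B. le D A (rdx D (pair D (idt D A) g) \<beta>) \<alpha>))"

definition univ_free' :: "('o, 'a, 'p) doctrine \<Rightarrow> 'o \<Rightarrow> 'p \<Rightarrow> bool" where
  "univ_free' D I \<alpha> \<longleftrightarrow> ex_free D I \<alpha> \<and>
     (\<forall>A\<in>Ob D. \<forall>f\<in>hom D A I. univ_splitting' D A (rdx D f \<alpha>))"

definition enough_univ_free' :: "('o, 'a, 'p) doctrine \<Rightarrow> bool" where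
  "enough_univ_free' D \<longleftrightarrow>
     (\<forall>I\<in>Ob D. \<forall>\<alpha>. ex_free D I \<alpha> \<longrightarrow>
        (\<exists>A\<in>Ob D. \<exists>\<beta>. univ_free' D (prd D I A) \<beta> \<and> \<alpha> = all1 D I A \<beta>))"

definition quant_free :: "('o, 'a, 'p) doctrine \<Rightarrow> 'o \<Rightarrow> 'p \<Rightarrow> bool" where
  "quant_free D I \<alpha> \<longleftrightarrow> ex_free D I \<alpha> \<and> univ_free' D I \<alpha>"

definition godel_doctrine :: "('o, 'a, 'p) doctrine \<Rightarrow> bool" where
  "godel_doctrine D \<longleftrightarrow>
     is_doctrine D \<and> cartesian_closed D \<and> existential D \<and> universal D \<and>
     enough_ex_free D \<and> forall_preserves_ex_free D \<and> enough_univ_free' D"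

end

theory Submission
  imports Defs
begin

text \<open>Both sides of the equivalence are Skolemized one quantifier at a time.
  Since \<open>\<forall>x. \<psi>\<close> is existential-free, it is an existential splitting, so
  \<open>\<exists>u. \<forall>x. \<psi> \<turnstile> \<exists>v. \<forall>y. \<phi>\<close> holds iff \<open>\<forall>x. \<psi>(i,u,x) \<turnstile> \<forall>y. \<phi>(i,f\<^sub>0(i,u),y)\<close> for
  some \<open>f\<^sub>0\<close>. Weakening the left side to the context \<open>(i,u,y)\<close> and using that
  \<open>\<phi>(i,f\<^sub>0(i,u),y)\<close> is a universal splitting in the sub-doctrine of
  existential-free predicates, this holds iff \<open>\<psi>(i,u,f\<^sub>1(i,u,y)) \<turnstile> \<phi>(i,f\<^sub>0(i,u),y)\<close>
  for some \<open>f\<^sub>1\<close>. The converse implications of both splittings hold in any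
  doctrine: \<open>\<beta>(a,g(a)) \<turnstile> \<exists>b. \<beta>(a,b)\<close> and \<open>\<forall>b. \<beta>(a,b) \<turnstile> \<beta>(a,g(a))\<close>.\<close>

locale cartesian_doctrine =
  fixes D :: "('o, 'a, 'p) doctrine"
  assumes is_doctrine: "is_doctrine D"
begin

lemma is_category: "is_category D"
  using is_doctrine by (simp add: is_doctrine_def)

lemma has_finite_products: "has_finite_products D"
  using is_doctrine by (simp add: is_doctrine_def)

lemma hom_objects: "f \<in> hom D A B \<Longrightarrow> A \<in> Ob D \<and> B \<in> Ob D"
  using is_category unfolding is_category_def hom_def by auto

lemma comp_in_hom: "f \<in> hom D A B \<Longrightarrow> g \<in> hom D B C \<Longrightarrow> cmp D g f \<in> hom D A C"
  using is_category unfolding is_category_def hom_def by auto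

lemma id_in_hom: "A \<in> Ob D \<Longrightarrow> idt D A \<in> hom D A A"
  using is_category unfolding is_category_def by auto

lemma comp_id_right: "f \<in> hom D A B \<Longrightarrow> cmp D f (idt D A) = f"
  using is_category unfolding is_category_def hom_def by auto

lemma comp_id_left: "f \<in> hom D A B \<Longrightarrow> cmp D (idt D B) f = f"
  using is_category unfolding is_category_def hom_def by auto

lemma comp_assoc:
  "f \<in> hom D A B \<Longrightarrow> g \<in> hom D B C \<Longrightarrow> h \<in> hom D C E \<Longrightarrow>
   cmp D h (cmp D g f) = cmp D (cmp D h g) f"
  using is_category unfolding is_category_def hom_def by auto

lemma prd_in_Ob: "A \<in> Ob D \<Longrightarrow> B \<in> Ob D \<Longrightarrow> prd D A B \<in> Ob D"
  using has_finite_products unfolding has_finite_products_def by auto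

lemma pr1_in_hom: "A \<in> Ob D \<Longrightarrow> B \<in> Ob D \<Longrightarrow> pr1 D A B \<in> hom D (prd D A B) A"
  using has_finite_products unfolding has_finite_products_def by auto

lemma pr2_in_hom: "A \<in> Ob D \<Longrightarrow> B \<in> Ob D \<Longrightarrow> pr2 D A B \<in> hom D (prd D A B) B"
  using has_finite_products unfolding has_finite_products_def by auto

lemma pair_universal:
  assumes "f \<in> hom D C A" and "g \<in> hom D C B"
  shows "pair D f g \<in> hom D C (prd D A B) \<and>
    cmp D (pr1 D A B) (pair D f g) = f \<and> cmp D (pr2 D A B) (pair D f g) = g \<and>
    (\<forall>h\<in>hom D C (prd D A B). cmp D (pr1 D A B) h = f \<and> cmp D (pr2 D A B) h = g
       \<longrightarrow> h = pair D f g)"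
  using has_finite_products hom_objects[OF assms(1)] hom_objects[OF assms(2)] assms
  unfolding has_finite_products_def by blast

lemma pair_in_hom: "f \<in> hom D C A \<Longrightarrow> g \<in> hom D C B \<Longrightarrow> pair D f g \<in> hom D C (prd D A B)"
  using pair_universal by blast

lemma pr1_pair: "f \<in> hom D C A \<Longrightarrow> g \<in> hom D C B \<Longrightarrow> cmp D (pr1 D A B) (pair D f g) = f"
  using pair_universal by blast

lemma pr2_pair: "f \<in> hom D C A \<Longrightarrow> g \<in> hom D C B \<Longrightarrow> cmp D (pr2 D A B) (pair D f g) = g"
  using pair_universal by blast

lemma pair_unique:
  "f \<in> hom D C A \<Longrightarrow> g \<in> hom D C B \<Longrightarrow> h \<in> hom D C (prd D A B) \<Longrightarrow>
   cmp D (pr1 D A B) h = f \<Longrightarrow> cmp D (pr2 D A B) h = g \<Longrightarrow> h = pair D f g"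
  using pair_universal by blast

lemma pair_comp:
  assumes a: "a \<in> hom D C A" and b: "b \<in> hom D C B" and c: "c \<in> hom D E C"
  shows "cmp D (pair D a b) c = pair D (cmp D a c) (cmp D b c)"
proof (rule pair_unique)
  have ob: "A \<in> Ob D" "B \<in> Ob D" using hom_objects a b by auto
  have p: "pair D a b \<in> hom D C (prd D A B)" using pair_in_hom a b .
  show "cmp D a c \<in> hom D E A" "cmp D b c \<in> hom D E B"
    "cmp D (pair D a b) c \<in> hom D E (prd D A B)"
    using comp_in_hom c a b p by auto
  show "cmp D (pr1 D A B) (cmp D (pair D a b) c) = cmp D a c"
    using comp_assoc[OF c p pr1_in_hom[OF ob]] pr1_pair[OF a b] by simp
  show "cmp D (pr2 D A B) (cmp D (pair D a b) c) = cmp D b c"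
    using comp_assoc[OF c p pr2_in_hom[OF ob]] pr2_pair[OF a b] by simp
qed

lemma times_eq:
  "f \<in> hom D A' A \<Longrightarrow> g \<in> hom D B' B \<Longrightarrow>
   times D f g = pair D (cmp D f (pr1 D A' B')) (cmp D g (pr2 D A' B'))"
  by (simp add: times_def hom_def)

lemma times_in_hom:
  assumes f: "f \<in> hom D A' A" and g: "g \<in> hom D B' B"
  shows "times D f g \<in> hom D (prd D A' B') (prd D A B)"
proof -
  have ob: "A' \<in> Ob D" "B' \<in> Ob D" using hom_objects f g by auto
  show ?thesis
    unfolding times_eq[OF f g]
    using pair_in_hom comp_in_hom pr1_in_hom[OF ob] pr2_in_hom[OF ob] f g by blast
qed

lemma times_pair:
  assumes f: "f \<in> hom D A' A" and g: "g \<in> hom D B' B"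
    and a: "a \<in> hom D C A'" and b: "b \<in> hom D C B'"
  shows "cmp D (times D f g) (pair D a b) = pair D (cmp D f a) (cmp D g b)"
proof -
  have ob: "A' \<in> Ob D" "B' \<in> Ob D" using hom_objects f g by auto
  have p: "pair D a b \<in> hom D C (prd D A' B')" using pair_in_hom a b .
  have "cmp D (times D f g) (pair D a b) =
    pair D (cmp D (cmp D f (pr1 D A' B')) (pair D a b)) (cmp D (cmp D g (pr2 D A' B')) (pair D a b))"
    unfolding times_eq[OF f g]
    using pair_comp comp_in_hom pr1_in_hom[OF ob] pr2_in_hom[OF ob] f g p by blast
  also have "\<dots> = pair D (cmp D f a) (cmp D g b)"
    using comp_assoc[OF p pr1_in_hom[OF ob] f] comp_assoc[OF p pr2_in_hom[OF ob] g]
      pr1_pair[OF a b] pr2_pair[OF a b]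
    by simp
  finally show ?thesis .
qed

lemma times_pair_id:
  assumes f: "f \<in> hom D C A" and g: "g \<in> hom D C B" and E: "E \<in> Ob D"
  shows "times D (pair D f g) (idt D E) =
    pair D (pair D (cmp D f (pr1 D C E)) (cmp D g (pr1 D C E))) (pr2 D C E)"
proof -
  have C: "C \<in> Ob D" using hom_objects f by blast
  show ?thesis
    using times_eq[OF pair_in_hom[OF f g] id_in_hom[OF E]]
      pair_comp[OF f g pr1_in_hom[OF C E]] comp_id_left[OF pr2_in_hom[OF C E]]
    by simp
qed

lemma le_refl: "A \<in> Ob D \<Longrightarrow> x \<in> Pr D A \<Longrightarrow> le D A x x"
  using is_doctrine unfolding is_doctrine_def by blast

lemma le_trans:
  "A \<in> Ob D \<Longrightarrow> x \<in> Pr D A \<Longrightarrow> y \<in> Pr D A \<Longrightarrow> z \<in> Pr D A \<Longrightarrow>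
   le D A x y \<Longrightarrow> le D A y z \<Longrightarrow> le D A x z"
  using is_doctrine unfolding is_doctrine_def by blast

lemma rdx_in_Pr: "f \<in> hom D A B \<Longrightarrow> x \<in> Pr D B \<Longrightarrow> rdx D f x \<in> Pr D A"
  using is_doctrine hom_objects unfolding is_doctrine_def by blast

lemma rdx_mono:
  "f \<in> hom D A B \<Longrightarrow> x \<in> Pr D B \<Longrightarrow> y \<in> Pr D B \<Longrightarrow> le D B x y \<Longrightarrow>
   le D A (rdx D f x) (rdx D f y)"
  using is_doctrine hom_objects unfolding is_doctrine_def by blast

lemma rdx_id: "A \<in> Ob D \<Longrightarrow> x \<in> Pr D A \<Longrightarrow> rdx D (idt D A) x = x"
  using is_doctrine unfolding is_doctrine_def by blast

lemma rdx_comp: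
  "f \<in> hom D A B \<Longrightarrow> g \<in> hom D B C \<Longrightarrow> x \<in> Pr D C \<Longrightarrow>
   rdx D (cmp D g f) x = rdx D f (rdx D g x)"
  using is_doctrine unfolding is_doctrine_def hom_def by auto

lemma rdx_pair_id_rdx_times_id:
  assumes f: "f \<in> hom D A' A" and g: "g \<in> hom D A' B" and \<beta>: "\<beta> \<in> Pr D (prd D A B)"
  shows "rdx D (pair D (idt D A') g) (rdx D (times D f (idt D B)) \<beta>) = rdx D (pair D f g) \<beta>"
proof -
  have A': "A' \<in> Ob D" and B: "B \<in> Ob D" using hom_objects f g by auto
  have "rdx D (pair D (idt D A') g) (rdx D (times D f (idt D B)) \<beta>) =
    rdx D (cmp D (times D f (idt D B)) (pair D (idt D A') g)) \<beta>"
    using rdx_comp pair_in_hom[OF id_in_hom[OF A'] g] times_in_hom[OF f id_in_hom[OF B]] \<beta>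
    by metis
  then show ?thesis
    using times_pair[OF f id_in_hom[OF B] id_in_hom[OF A'] g] comp_id_right[OF f] comp_id_left[OF g]
    by simp
qed

lemma ex_free_in_Pr: "ex_free D I \<alpha> \<Longrightarrow> \<alpha> \<in> Pr D I"
  by (simp add: ex_free_def)

lemma ex_free_rdx:
  assumes \<alpha>: "ex_free D I \<alpha>" and f: "f \<in> hom D J I"
  shows "ex_free D J (rdx D f \<alpha>)"
  unfolding ex_free_def
proof (intro conjI ballI)
  show "rdx D f \<alpha> \<in> Pr D J" using rdx_in_Pr[OF f ex_free_in_Pr[OF \<alpha>]] .
  fix A h assume "A \<in> Ob D" and h: "h \<in> hom D A J"
  then have "ex_splitting D A (rdx D (cmp D f h) \<alpha>)"
    using \<alpha> comp_in_hom[OF h f] unfolding ex_free_def by blast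
  then show "ex_splitting D A (rdx D h (rdx D f \<alpha>))"
    using rdx_comp[OF h f ex_free_in_Pr[OF \<alpha>]] by simp
qed

lemma ex_free_ex_splitting: "ex_free D I \<alpha> \<Longrightarrow> I \<in> Ob D \<Longrightarrow> ex_splitting D I \<alpha>"
  using rdx_id id_in_hom unfolding ex_free_def by metis

lemma univ_free'_rdx:
  assumes \<alpha>: "univ_free' D I \<alpha>" and f: "f \<in> hom D J I"
  shows "univ_free' D J (rdx D f \<alpha>)"
  unfolding univ_free'_def
proof (intro conjI ballI)
  have \<alpha>_ex_free: "ex_free D I \<alpha>" using \<alpha> by (simp add: univ_free'_def)
  show "ex_free D J (rdx D f \<alpha>)" using ex_free_rdx[OF \<alpha>_ex_free f] .
  fix A h assume "A \<in> Ob D" and h: "h \<in> hom D A J"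
  then have "univ_splitting' D A (rdx D (cmp D f h) \<alpha>)"
    using \<alpha> comp_in_hom[OF h f] unfolding univ_free'_def by blast
  then show "univ_splitting' D A (rdx D h (rdx D f \<alpha>))"
    using rdx_comp[OF h f ex_free_in_Pr[OF \<alpha>_ex_free]] by simp
qed

lemma univ_free'_univ_splitting': "univ_free' D I \<alpha> \<Longrightarrow> I \<in> Ob D \<Longrightarrow> univ_splitting' D I \<alpha>"
  using rdx_id id_in_hom ex_free_in_Pr unfolding univ_free'_def by metis

end

locale quantified_doctrine = cartesian_doctrine +
  assumes existential: "existential D" and universal: "universal D"
begin

lemma ex1_in_Pr:
  "A \<in> Ob D \<Longrightarrow> B \<in> Ob D \<Longrightarrow> \<beta> \<in> Pr D (prd D A B) \<Longrightarrow> ex1 D A B \<beta> \<in> Pr D A"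
  using existential unfolding existential_def by blast

lemma ex1_le_iff:
  "A \<in> Ob D \<Longrightarrow> B \<in> Ob D \<Longrightarrow> \<beta> \<in> Pr D (prd D A B) \<Longrightarrow> \<alpha> \<in> Pr D A \<Longrightarrow>
   le D A (ex1 D A B \<beta>) \<alpha> \<longleftrightarrow> le D (prd D A B) \<beta> (rdx D (pr1 D A B) \<alpha>)"
  using existential unfolding existential_def by blast

lemma ex1_rdx_times_id:
  "A \<in> Ob D \<Longrightarrow> B \<in> Ob D \<Longrightarrow> f \<in> hom D A' A \<Longrightarrow> \<beta> \<in> Pr D (prd D A B) \<Longrightarrow>
   ex1 D A' B (rdx D (times D f (idt D B)) \<beta>) = rdx D f (ex1 D A B \<beta>)"
  using existential hom_objects unfolding existential_def by blast

lemma all1_in_Pr: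
  "A \<in> Ob D \<Longrightarrow> B \<in> Ob D \<Longrightarrow> \<beta> \<in> Pr D (prd D A B) \<Longrightarrow> all1 D A B \<beta> \<in> Pr D A"
  using universal unfolding universal_def by blast

lemma le_all1_iff:
  "A \<in> Ob D \<Longrightarrow> B \<in> Ob D \<Longrightarrow> \<beta> \<in> Pr D (prd D A B) \<Longrightarrow> \<alpha> \<in> Pr D A \<Longrightarrow>
   le D A \<alpha> (all1 D A B \<beta>) \<longleftrightarrow> le D (prd D A B) (rdx D (pr1 D A B) \<alpha>) \<beta>"
  using universal unfolding universal_def by blast

lemma all1_rdx_times_id:
  "A \<in> Ob D \<Longrightarrow> B \<in> Ob D \<Longrightarrow> f \<in> hom D A' A \<Longrightarrow> \<beta> \<in> Pr D (prd D A B) \<Longrightarrow>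
   all1 D A' B (rdx D (times D f (idt D B)) \<beta>) = rdx D f (all1 D A B \<beta>)"
  using universal hom_objects unfolding universal_def by blast

lemma rdx_pair_id_le_ex1:
  assumes A: "A \<in> Ob D" and B: "B \<in> Ob D" and \<beta>: "\<beta> \<in> Pr D (prd D A B)"
    and g: "g \<in> hom D A B"
  shows "le D A (rdx D (pair D (idt D A) g) \<beta>) (ex1 D A B \<beta>)"
proof -
  have \<gamma>: "pair D (idt D A) g \<in> hom D A (prd D A B)" using pair_in_hom id_in_hom[OF A] g by blast
  have ex: "ex1 D A B \<beta> \<in> Pr D A" using ex1_in_Pr[OF A B \<beta>] .
  have "le D (prd D A B) \<beta> (rdx D (pr1 D A B) (ex1 D A B \<beta>))"
    using ex1_le_iff[OF A B \<beta> ex] le_refl[OF A ex] by simp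
  then have "le D A (rdx D (pair D (idt D A) g) \<beta>)
      (rdx D (cmp D (pr1 D A B) (pair D (idt D A) g)) (ex1 D A B \<beta>))"
    using rdx_mono[OF \<gamma> \<beta>] rdx_in_Pr[OF pr1_in_hom[OF A B] ex] rdx_comp[OF \<gamma> pr1_in_hom[OF A B] ex]
    by simp
  then show ?thesis
    using pr1_pair[OF id_in_hom[OF A] g] rdx_id[OF A ex] by simp
qed

lemma all1_le_rdx_pair_id:
  assumes A: "A \<in> Ob D" and B: "B \<in> Ob D" and \<beta>: "\<beta> \<in> Pr D (prd D A B)"
    and g: "g \<in> hom D A B"
  shows "le D A (all1 D A B \<beta>) (rdx D (pair D (idt D A) g) \<beta>)"
proof -
  have \<gamma>: "pair D (idt D A) g \<in> hom D A (prd D A B)" using pair_in_hom id_in_hom[OF A] g by blast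
  have all: "all1 D A B \<beta> \<in> Pr D A" using all1_in_Pr[OF A B \<beta>] .
  have "le D (prd D A B) (rdx D (pr1 D A B) (all1 D A B \<beta>)) \<beta>"
    using le_all1_iff[OF A B \<beta> all] le_refl[OF A all] by simp
  then have "le D A (rdx D (cmp D (pr1 D A B) (pair D (idt D A) g)) (all1 D A B \<beta>))
      (rdx D (pair D (idt D A) g) \<beta>)"
    using rdx_mono[OF \<gamma> _ \<beta>] rdx_in_Pr[OF pr1_in_hom[OF A B] all] rdx_comp[OF \<gamma> pr1_in_hom[OF A B] all]
    by simp
  then show ?thesis
    using pr1_pair[OF id_in_hom[OF A] g] rdx_id[OF A all] by simp
qed

lemma ex_splitting_le_ex1_iff:
  assumes "ex_splitting D A \<alpha>" and A: "A \<in> Ob D" and B: "B \<in> Ob D"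
    and \<alpha>: "\<alpha> \<in> Pr D A" and \<beta>: "\<beta> \<in> Pr D (prd D A B)"
  shows "le D A \<alpha> (ex1 D A B \<beta>) \<longleftrightarrow> (\<exists>g\<in>hom D A B. le D A \<alpha> (rdx D (pair D (idt D A) g) \<beta>))"
proof
  assume "le D A \<alpha> (ex1 D A B \<beta>)"
  then show "\<exists>g\<in>hom D A B. le D A \<alpha> (rdx D (pair D (idt D A) g) \<beta>)"
    using assms unfolding ex_splitting_def by blast
next
  assume "\<exists>g\<in>hom D A B. le D A \<alpha> (rdx D (pair D (idt D A) g) \<beta>)"
  then show "le D A \<alpha> (ex1 D A B \<beta>)"
    using le_trans[OF A \<alpha>] rdx_pair_id_le_ex1[OF A B \<beta>] rdx_in_Pr pair_in_hom id_in_hom[OF A]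
      ex1_in_Pr[OF A B \<beta>] \<beta>
    by metis
qed

lemma univ_splitting'_all1_le_iff:
  assumes "univ_splitting' D A \<alpha>" and A: "A \<in> Ob D" and B: "B \<in> Ob D"
    and \<alpha>: "\<alpha> \<in> Pr D A" and \<beta>: "ex_free D (prd D A B) \<beta>"
  shows "le D A (all1 D A B \<beta>) \<alpha> \<longleftrightarrow> (\<exists>g\<in>hom D A B. le D A (rdx D (pair D (idt D A) g) \<beta>) \<alpha>)"
proof
  assume "le D A (all1 D A B \<beta>) \<alpha>"
  then show "\<exists>g\<in>hom D A B. le D A (rdx D (pair D (idt D A) g) \<beta>) \<alpha>"
    using assms unfolding univ_splitting'_def by blast
next
  have \<beta>_Pr: "\<beta> \<in> Pr D (prd D A B)" using ex_free_in_Pr[OF \<beta>] .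
  assume "\<exists>g\<in>hom D A B. le D A (rdx D (pair D (idt D A) g) \<beta>) \<alpha>"
  then show "le D A (all1 D A B \<beta>) \<alpha>"
    using le_trans[OF A _ _ \<alpha>] all1_le_rdx_pair_id[OF A B \<beta>_Pr] rdx_in_Pr pair_in_hom id_in_hom[OF A]
      all1_in_Pr[OF A B \<beta>_Pr] \<beta>_Pr
    by metis
qed

lemma ex1_le_ex1_iff:
  assumes I: "I \<in> Ob D" and U: "U \<in> Ob D" and V: "V \<in> Ob D"
    and split: "ex_splitting D (prd D I U) \<alpha>" and \<alpha>: "\<alpha> \<in> Pr D (prd D I U)"
    and \<beta>: "\<beta> \<in> Pr D (prd D I V)"
  shows "le D I (ex1 D I U \<alpha>) (ex1 D I V \<beta>) \<longleftrightarrow>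
    (\<exists>f\<in>hom D (prd D I U) V. le D (prd D I U) \<alpha> (rdx D (pair D (pr1 D I U) f) \<beta>))"
proof -
  let ?p = "pr1 D I U"
  have IU: "prd D I U \<in> Ob D" using prd_in_Ob[OF I U] .
  have p: "?p \<in> hom D (prd D I U) I" using pr1_in_hom[OF I U] .
  have \<beta>': "rdx D (times D ?p (idt D V)) \<beta> \<in> Pr D (prd D (prd D I U) V)"
    using rdx_in_Pr[OF times_in_hom[OF p id_in_hom[OF V]] \<beta>] .
  have "le D I (ex1 D I U \<alpha>) (ex1 D I V \<beta>) \<longleftrightarrow>
      le D (prd D I U) \<alpha> (rdx D ?p (ex1 D I V \<beta>))"
    using ex1_le_iff[OF I U \<alpha> ex1_in_Pr[OF I V \<beta>]] .
  also have "rdx D ?p (ex1 D I V \<beta>) = ex1 D (prd D I U) V (rdx D (times D ?p (idt D V)) \<beta>)"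
    using ex1_rdx_times_id[OF I V p \<beta>] by simp
  also have "le D (prd D I U) \<alpha> \<dots> \<longleftrightarrow> (\<exists>f\<in>hom D (prd D I U) V.
      le D (prd D I U) \<alpha> (rdx D (pair D (idt D (prd D I U)) f) (rdx D (times D ?p (idt D V)) \<beta>)))"
    using ex_splitting_le_ex1_iff[OF split IU V \<alpha> \<beta>'] .
  also have "\<dots> \<longleftrightarrow>
      (\<exists>f\<in>hom D (prd D I U) V. le D (prd D I U) \<alpha> (rdx D (pair D ?p f) \<beta>))"
    using rdx_pair_id_rdx_times_id[OF p _ \<beta>] by simp
  finally show ?thesis .
qed

lemma all1_le_all1_iff:
  assumes J: "J \<in> Ob D" and X: "X \<in> Ob D" and Y: "Y \<in> Ob D"
    and \<psi>: "ex_free D (prd D J X) \<psi>" and \<phi>: "univ_free' D (prd D J Y) \<phi>"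
  shows "le D J (all1 D J X \<psi>) (all1 D J Y \<phi>) \<longleftrightarrow>
    (\<exists>f\<in>hom D (prd D J Y) X. le D (prd D J Y) (rdx D (pair D (pr1 D J Y) f) \<psi>) \<phi>)"
proof -
  let ?q = "pr1 D J Y"
  have JY: "prd D J Y \<in> Ob D" using prd_in_Ob[OF J Y] .
  have q: "?q \<in> hom D (prd D J Y) J" using pr1_in_hom[OF J Y] .
  have \<psi>_Pr: "\<psi> \<in> Pr D (prd D J X)" using ex_free_in_Pr[OF \<psi>] .
  have \<phi>_Pr: "\<phi> \<in> Pr D (prd D J Y)"
    using \<phi> ex_free_in_Pr unfolding univ_free'_def by blast
  have "le D J (all1 D J X \<psi>) (all1 D J Y \<phi>) \<longleftrightarrow>
      le D (prd D J Y) (rdx D ?q (all1 D J X \<psi>)) \<phi>"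
    using le_all1_iff[OF J Y \<phi>_Pr all1_in_Pr[OF J X \<psi>_Pr]] .
  also have "rdx D ?q (all1 D J X \<psi>) = all1 D (prd D J Y) X (rdx D (times D ?q (idt D X)) \<psi>)"
    using all1_rdx_times_id[OF J X q \<psi>_Pr] by simp
  also have "le D (prd D J Y) \<dots> \<phi> \<longleftrightarrow> (\<exists>f\<in>hom D (prd D J Y) X.
      le D (prd D J Y) (rdx D (pair D (idt D (prd D J Y)) f) (rdx D (times D ?q (idt D X)) \<psi>)) \<phi>)"
    using univ_splitting'_all1_le_iff[OF univ_free'_univ_splitting'[OF \<phi> JY] JY X \<phi>_Pr
        ex_free_rdx[OF \<psi> times_in_hom[OF q id_in_hom[OF X]]]] .
  also have "\<dots> \<longleftrightarrow>
      (\<exists>f\<in>hom D (prd D J Y) X. le D (prd D J Y) (rdx D (pair D ?q f) \<psi>) \<phi>)"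
    using rdx_pair_id_rdx_times_id[OF q _ \<psi>_Pr] by simp
  finally show ?thesis .
qed

end

theorem theorem2:
  fixes D :: "('o, 'a, 'p) doctrine"
  assumes "godel_doctrine D"
    and "I \<in> Ob D" "U \<in> Ob D" "X \<in> Ob D" "V \<in> Ob D" "Y \<in> Ob D"
    and "quant_free D (prd D (prd D I U) X) \<psi>"
    and "quant_free D (prd D (prd D I V) Y) \<phi>"
  shows "le D I (ex1 D I U (all1 D (prd D I U) X \<psi>)) (ex1 D I V (all1 D (prd D I V) Y \<phi>))
     \<longleftrightarrow> (\<exists>f0\<in>hom D (prd D I U) V. \<exists>f1\<in>hom D (prd D (prd D I U) Y) X.
           le D (prd D (prd D I U) Y)
             (rdx D (pair D (pr1 D (prd D I U) Y) f1) \<psi>)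
             (rdx D (pair D (pair D (cmp D (pr1 D I U) (pr1 D (prd D I U) Y))
                                    (cmp D f0 (pr1 D (prd D I U) Y)))
                            (pr2 D (prd D I U) Y)) \<phi>))"
proof -
  interpret quantified_doctrine D
    using assms(1) by unfold_locales (simp_all add: godel_doctrine_def)
  note I = assms(2) and U = assms(3) and X = assms(4) and V = assms(5) and Y = assms(6)
  let ?IU = "prd D I U" and ?IV = "prd D I V"
  have IU: "?IU \<in> Ob D" and IV: "?IV \<in> Ob D" using prd_in_Ob I U V by auto
  have \<psi>: "ex_free D (prd D ?IU X) \<psi>" and \<phi>: "univ_free' D (prd D ?IV Y) \<phi>"
    using assms(7,8) by (simp_all add: quant_free_def)
  have \<phi>_Pr: "\<phi> \<in> Pr D (prd D ?IV Y)" using \<phi> ex_free_in_Pr unfolding univ_free'_def by blast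
  have \<psi>_all: "ex_free D ?IU (all1 D ?IU X \<psi>)"
    using assms(1) \<psi> IU X unfolding godel_doctrine_def forall_preserves_ex_free_def by blast
  have skolem_f1: "le D ?IU (all1 D ?IU X \<psi>) (rdx D (pair D (pr1 D I U) f0) (all1 D ?IV Y \<phi>)) \<longleftrightarrow>
      (\<exists>f1\<in>hom D (prd D ?IU Y) X. le D (prd D ?IU Y) (rdx D (pair D (pr1 D ?IU Y) f1) \<psi>)
        (rdx D (pair D (pair D (cmp D (pr1 D I U) (pr1 D ?IU Y)) (cmp D f0 (pr1 D ?IU Y)))
          (pr2 D ?IU Y)) \<phi>))"
    if f0: "f0 \<in> hom D ?IU V" for f0
  proof -
    have pf0: "pair D (pr1 D I U) f0 \<in> hom D ?IU ?IV" using pair_in_hom[OF pr1_in_hom[OF I U] f0] .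
    show ?thesis
      using all1_le_all1_iff[OF IU X Y \<psi> univ_free'_rdx[OF \<phi> times_in_hom[OF pf0 id_in_hom[OF Y]]]]
        all1_rdx_times_id[OF IV Y pf0 \<phi>_Pr] times_pair_id[OF pr1_in_hom[OF I U] f0 Y]
      by simp
  qed
  show ?thesis
    using ex1_le_ex1_iff[OF I U V ex_free_ex_splitting[OF \<psi>_all IU] ex_free_in_Pr[OF \<psi>_all]
        all1_in_Pr[OF IV Y \<phi>_Pr]] skolem_f1
    by (auto cong: bex_cong)
qed

end
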